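(* Let $X$ and $Y$ be finite topological spaces and give $X\times Y$ the product topology. Then for all $(a,b),(c,d)\in X\times Y$, $$\Psi_{X\times Y}((a,b),(c,d))=\Psi_X(a,c)\,|U_{[d]}|+\Psi_Y(b,d)\,|U_{[c]}|-\Psi_X(a,c)\,\Psi_Y(b,d),$$ where $U_{[c]}$ is the minimal open set of $[c]$ in the quotient space $X/{\sim}$ and $U_{[d]}$ is the minimal open set of $[d]$ in $Y/{\sim}$.
   Context: For a finite topological space $X$ and $x\in X$, $U_x$ denotes the minimal open set containing $x$ (the intersection of all open sets containing $x$). A nested sequence of open sets around $x$ is a finite sequence $U_0\subsetneq U_1\subsetneq\cdots\subsetneq U_m=X$ of open sets with $U_0=U_x$ such that for each $j$ there is no open set $V$ with $U_j\subsetneq V\subsetneq U_{j+1}$. The furtherness function $\Psi_X:X\times X\to\{0,1,\dots,|X|-1\}$ is defined by: $\Psi_X(x,y)$ is the smallest integer $k\ge 0$ such that there exists a nested sequence $(U_j)_{j\ge0}$ of open sets around $x$ with $y\in U_k$. For a finite space $X$, $\sim$ is the equivalence relation $x\sim y$ iff $\Psi_X(x,y)=\Psi_X(y,x)=0$ (equivalently $U_x=U_y$), and $X/{\sim}$ carries the quotient topology; in it $U_{[c]}=\{[y]\mid y\in U_c\}$, so $|U_{[c]}|$ is the number of $\sim$-classes meeting $U_c$. *)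

theory Defs
  imports "HOL-Analysis.Analysis"
begin

definition minopen :: "'a topology \<Rightarrow> 'a \<Rightarrow> 'a set" where
  "minopen X x = \<Inter> {V. openin X V \<and> x \<in> V}"

definition nested_seq :: "'a topology \<Rightarrow> 'a \<Rightarrow> 'a set list \<Rightarrow> bool" where
  "nested_seq X x us \<longleftrightarrow>
     us \<noteq> [] \<and> us ! 0 = minopen X x \<and> last us = topspace X \<and>
     (\<forall>j < length us. openin X (us ! j)) \<and>
     (\<forall>j. Suc j < length us \<longrightarrow>
        us ! j \<subset> us ! Suc j \<and>
        \<not> (\<exists>V. openin X V \<and> us ! j \<subset> V \<and> V \<subset> us ! Suc j))"

definition Psi :: "'a topology \<Rightarrow> 'a \<Rightarrow> 'a \<Rightarrow> nat" where
  "Psi X x y = (LEAST k. \<exists>us. nested_seq X x us \<and> k < length us \<and> y \<in> us ! k)"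

definition psi_sim :: "'a topology \<Rightarrow> 'a \<Rightarrow> 'a \<Rightarrow> bool" where
  "psi_sim X x y \<longleftrightarrow> Psi X x y = 0 \<and> Psi X y x = 0"

definition sim_class :: "'a topology \<Rightarrow> 'a \<Rightarrow> 'a set" where
  "sim_class X x = {y \<in> topspace X. psi_sim X x y}"

text \<open>Minimal open set of [c] in the quotient X/~ : U_[c] = {[y] | y \<in> U_c}.\<close>
definition quot_minopen :: "'a topology \<Rightarrow> 'a \<Rightarrow> 'a set set" where
  "quot_minopen X c = sim_class X ` minopen X c"

end

theory Submission
  imports Defs
begin

text \<open>Points with the same minimal open set form one \<open>\<sim>\<close>-class. If an open set \<open>V\<close> covers an
  open set \<open>U\<close> (no open set lies strictly between them), all points of \<open>V - U\<close> share one minimal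
  open set: for \<open>z \<in> V - U\<close> with \<open>|U\<^sub>z|\<close> least, \<open>U \<union> U\<^sub>z\<close> is open, hence equal to \<open>V\<close>, and
  every \<open>w \<in> V - U\<close> then has \<open>U\<^sub>w \<subseteq> U\<^sub>z\<close> with \<open>|U\<^sub>w| \<ge> |U\<^sub>z|\<close>. This class does not meet the
  open set \<open>U\<close>, so every step of a nested sequence adds exactly one class, and \<open>\<Psi>(x,y)\<close> is the
  number of classes meeting \<open>U\<^sub>y\<close> but not \<open>U\<^sub>x\<close>; the bound is attained by a nested sequence
  through \<open>U\<^sub>x \<union> U\<^sub>y\<close>.

  In \<open>X \<times> Y\<close> the minimal open sets are the products \<open>U\<^sub>c \<times> U\<^sub>d\<close>, so the classes meeting
  \<open>U\<^bsub>(c,d)\<^esub>\<close> but not \<open>U\<^bsub>(a,b)\<^esub>\<close> correspond to \<open>A \<times> B - A' \<times> B'\<close>, where \<open>A, A', B, B'\<close> are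
  the sets of classes meeting \<open>U\<^sub>c, U\<^sub>a, U\<^sub>d, U\<^sub>b\<close>. Thus \<open>\<Psi>((a,b),(c,d)) = |A||B| - |A \<inter> A'||B \<inter> B'|\<close>,
  and substituting \<open>|A \<inter> A'| = |A| - \<Psi>(a,c)\<close> and \<open>|B \<inter> B'| = |B| - \<Psi>(b,d)\<close> gives the formula.\<close>

section \<open>Covering chains of open sets\<close>

definition covers :: "'a topology \<Rightarrow> 'a set \<Rightarrow> 'a set \<Rightarrow> bool" where
  "covers X U V \<longleftrightarrow> U \<subset> V \<and> \<not> (\<exists>W. openin X W \<and> U \<subset> W \<and> W \<subset> V)"

definition covering_chain :: "'a topology \<Rightarrow> 'a set list \<Rightarrow> bool" where
  "covering_chain X us \<longleftrightarrow>
     us \<noteq> [] \<and> (\<forall>U \<in> set us. openin X U) \<and> successively (covers X) us"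

lemma not_covering_chain_Nil [simp]: "\<not> covering_chain X []"
  by (simp add: covering_chain_def)

lemma covering_chain_singleton [simp]: "covering_chain X [U] \<longleftrightarrow> openin X U"
  by (simp add: covering_chain_def)

lemma covering_chain_Cons_Cons [simp]:
  "covering_chain X (U # V # vs) \<longleftrightarrow> openin X U \<and> covers X U V \<and> covering_chain X (V # vs)"
  by (auto simp: covering_chain_def)

lemma openin_covering_chain: "covering_chain X us \<Longrightarrow> U \<in> set us \<Longrightarrow> openin X U"
  by (simp add: covering_chain_def)

lemma covering_chain_append:
  assumes "covering_chain X us" "covering_chain X (last us # vs)"
  shows "covering_chain X (us @ vs)"
  using assms by (auto simp: covering_chain_def successively_append_iff successively_Cons)

lemma covering_chain_take:
  assumes "covering_chain X us" "k < length us"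
  shows "covering_chain X (take (Suc k) us)"
proof -
  have "successively (covers X) (take (Suc k) us @ drop (Suc k) us)"
    using assms(1) by (simp add: covering_chain_def)
  then have "successively (covers X) (take (Suc k) us)"
    unfolding successively_append_iff by blast
  then show ?thesis
    using assms by (auto simp: covering_chain_def dest: in_set_takeD)
qed

lemma covering_chain_hd_subset_last: "covering_chain X us \<Longrightarrow> hd us \<subseteq> last us"
proof (induction us rule: induct_list012)
  case (3 U V vs)
  then have "U \<subseteq> V" "V \<subseteq> last (V # vs)"
    by (auto simp: covers_def)
  then show ?case
    by simp
qed simp_all

lemma nested_seq_iff_covering_chain:
  "nested_seq X x us \<longleftrightarrow> covering_chain X us \<and> hd us = minopen X x \<and> last us = topspace X"
  by (auto simp: nested_seq_def covering_chain_def covers_def successively_conv_nth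
      all_set_conv_all_nth hd_conv_nth)

section \<open>Minimal open sets\<close>

lemma minopen_least: "openin X V \<Longrightarrow> x \<in> V \<Longrightarrow> minopen X x \<subseteq> V"
  unfolding minopen_def by auto

lemma minopen_mem: "x \<in> topspace X \<Longrightarrow> x \<in> minopen X x"
  unfolding minopen_def by auto

lemma minopen_subset_topspace: "x \<in> topspace X \<Longrightarrow> minopen X x \<subseteq> topspace X"
  by (rule minopen_least) auto

lemma openin_minopen_saturated:
  assumes "openin X U" "w \<in> U" "z \<in> topspace X" "minopen X z = minopen X w"
  shows "z \<in> U"
  using minopen_mem[OF assms(3)] minopen_least[OF assms(1,2)] assms(4) by blast

lemma minopen_image_Diff:
  assumes "openin X U" "V \<subseteq> topspace X"
  shows "minopen X ` (V - U) = minopen X ` V - minopen X ` U"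
  using openin_minopen_saturated[OF assms(1)] assms(2) by blast

text \<open>The points of \<open>U\<^bsub>[x]\<^esub>\<close> in \<open>X/\<sim>\<close>, each class represented by the minimal open set
  common to its points.\<close>

definition minopens :: "'a topology \<Rightarrow> 'a \<Rightarrow> 'a set set" where
  "minopens X x = minopen X ` minopen X x"

lemma empty_notin_minopens: "x \<in> topspace X \<Longrightarrow> {} \<notin> minopens X x"
  unfolding minopens_def using minopen_mem minopen_subset_topspace by fastforce

context
  fixes X :: "'a topology"
  assumes finite: "finite (topspace X)"
begin

lemma openin_minopen: "x \<in> topspace X \<Longrightarrow> openin X (minopen X x)"
  unfolding minopen_def
proof (rule openin_Inter)
  show "finite {V. openin X V \<and> x \<in> V}"
    by (rule finite_subset[of _ "Pow (topspace X)"]) (auto dest: openin_subset simp: finite)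
qed auto

lemma minopen_subset_minopen:
  "x \<in> topspace X \<Longrightarrow> y \<in> minopen X x \<Longrightarrow> minopen X y \<subseteq> minopen X x"
  by (rule minopen_least[OF openin_minopen])

lemma finite_subset_topspace: "S \<subseteq> topspace X \<Longrightarrow> finite S"
  by (rule finite_subset[OF _ finite])

lemma minopen_eq_if_card_le:
  assumes "x \<in> topspace X" "y \<in> minopen X x" "card (minopen X x) \<le> card (minopen X y)"
  shows "minopen X y = minopen X x"
proof -
  have "minopen X y \<subseteq> minopen X x"
    using assms(1,2) by (rule minopen_subset_minopen)
  moreover have "finite (minopen X x)"
    using minopen_subset_topspace[OF assms(1)] by (rule finite_subset_topspace)
  ultimately show ?thesis
    using assms(3) by (meson card_seteq)
qed

lemma finite_minopen_image: "S \<subseteq> topspace X \<Longrightarrow> finite (minopen X ` S)"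
  by (simp add: finite_subset_topspace)

lemma covers_minopen_image_singleton:
  assumes "openin X U" "openin X V" "covers X U V"
  obtains z where "z \<in> V - U" "minopen X ` (V - U) = {minopen X z}"
proof -
  have "U \<subset> V" and no_between: "\<not> (\<exists>W. openin X W \<and> U \<subset> W \<and> W \<subset> V)"
    using assms(3) by (auto simp: covers_def)
  then obtain z0 where "z0 \<in> V - U"
    by blast
  from ex_has_least_nat[of "\<lambda>z. z \<in> V - U", OF this, of "\<lambda>z. card (minopen X z)"]
  obtain z where z: "z \<in> V - U"
    and least: "\<forall>w. w \<in> V - U \<longrightarrow> card (minopen X z) \<le> card (minopen X w)"
    by blast
  have z_top: "z \<in> topspace X"
    using z openin_subset[OF assms(2)] by blast
  have "openin X (U \<union> minopen X z)"
    using assms(1) openin_minopen[OF z_top] by (rule openin_Un)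
  moreover have "U \<subset> U \<union> minopen X z"
    using z minopen_mem[OF z_top] by blast
  moreover have "U \<union> minopen X z \<subseteq> V"
    using \<open>U \<subset> V\<close> minopen_least[OF assms(2)] z by blast
  ultimately have V_eq: "U \<union> minopen X z = V"
    using no_between by (meson psubsetI)
  have same: "minopen X w = minopen X z" if "w \<in> V - U" for w
    using that V_eq least by (intro minopen_eq_if_card_le[OF z_top]) auto
  have "minopen X ` (V - U) = {minopen X z}"
    using z same by blast
  with z show ?thesis
    by (rule that)
qed

lemma exists_covers:
  assumes "openin X U" "openin X W" "U \<subset> W"
  obtains V where "openin X V" "V \<subseteq> W" "covers X U V"
proof -
  have "openin X W \<and> U \<subset> W \<and> W \<subseteq> W"
    using assms by simp
  from ex_has_least_nat[of "\<lambda>V. openin X V \<and> U \<subset> V \<and> V \<subseteq> W", OF this, of card]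
  obtain V where V: "openin X V" "U \<subset> V" "V \<subseteq> W"
    and least: "\<forall>V'. openin X V' \<and> U \<subset> V' \<and> V' \<subseteq> W \<longrightarrow> card V \<le> card V'"
    by blast
  have "finite V"
    using finite_subset_topspace openin_subset[OF V(1)] by simp
  have "\<not> (openin X V' \<and> U \<subset> V' \<and> V' \<subset> V)" for V'
  proof
    assume V': "openin X V' \<and> U \<subset> V' \<and> V' \<subset> V"
    then have "card V' < card V"
      using \<open>finite V\<close> psubset_card_mono by blast
    moreover have "V' \<subseteq> W"
      using V' V(3) by (meson psubset_imp_subset subset_trans)
    then have "card V \<le> card V'"
      using least V' by blast
    ultimately show False
      by simp
  qed
  with V show ?thesis
    by (intro that) (auto simp: covers_def)
qed

lemma covering_chain_exists:
  assumes "openin X U" "openin X W" "U \<subseteq> W"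
  shows "\<exists>us. covering_chain X us \<and> hd us = U \<and> last us = W"
  using assms
proof (induction "card (W - U)" arbitrary: U rule: less_induct)
  case less
  show ?case
  proof (cases "U = W")
    case True
    then show ?thesis
      using less.prems by (intro exI[of _ "[U]"]) simp
  next
    case False
    then obtain V where V: "openin X V" "V \<subseteq> W" "covers X U V"
      using exists_covers less.prems by blast
    then have "W - V \<subset> W - U"
      by (auto simp: covers_def)
    moreover have "finite (W - U)"
      using finite_subset_topspace[of "W - U"] openin_subset[OF less.prems(2)] by blast
    ultimately obtain vs where vs: "covering_chain X vs" "hd vs = V" "last vs = W"
      using less.hyps[OF psubset_card_mono V(1) less.prems(2) V(2)] by blast
    then obtain r where "vs = V # r"
      by (cases vs) auto
    with vs V less.prems(1) show ?thesis
      by (intro exI[of _ "U # vs"]) simp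
  qed
qed

lemma covering_chain_length:
  "covering_chain X us \<Longrightarrow> length us = card (minopen X ` (last us - hd us)) + 1"
proof (induction us rule: induct_list012)
  case (3 U V vs)
  let ?L = "last (V # vs)"
  have chain: "covering_chain X (V # vs)" and U: "openin X U" and cover: "covers X U V"
    using "3.prems" by simp_all
  have V: "openin X V"
    using chain by (simp add: covering_chain_def)
  obtain z where z: "z \<in> V - U" "minopen X ` (V - U) = {minopen X z}"
    by (rule covers_minopen_image_singleton[OF U V cover])
  have "V \<subseteq> ?L"
    using covering_chain_hd_subset_last[OF chain] by simp
  then have "?L - U = (V - U) \<union> (?L - V)"
    using cover by (auto simp: covers_def)
  then have insert: "minopen X ` (?L - U) = insert (minopen X z) (minopen X ` (?L - V))"
    using z(2) by (simp add: image_Un)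
  have L_top: "?L \<subseteq> topspace X"
    using openin_covering_chain[OF chain] by (simp add: openin_subset)
  have "minopen X z \<notin> minopen X ` (?L - V)"
    using minopen_image_Diff[OF V L_top] z(1) by blast
  moreover have "finite (minopen X ` (?L - V))"
    using L_top by (intro finite_minopen_image) auto
  ultimately have "card (minopen X ` (?L - U)) = Suc (card (minopen X ` (?L - V)))"
    unfolding insert by simp
  then show ?case
    using "3.IH"(2)[OF chain] by simp
qed simp_all

section \<open>The furtherness function counts classes\<close>

lemma card_minopen_image_le_nested_seq:
  assumes vs: "nested_seq X x vs" "j < length vs" "y \<in> vs ! j"
  shows "card (minopen X ` (minopen X y - minopen X x)) \<le> j"
proof -
  have vs_chain: "covering_chain X vs" and hd: "hd vs = minopen X x"
    using vs(1) by (simp_all add: nested_seq_iff_covering_chain)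
  have chain: "covering_chain X (take (Suc j) vs)"
    by (rule covering_chain_take[OF vs_chain vs(2)])
  have "openin X (vs ! j)"
    by (rule openin_covering_chain[OF vs_chain nth_mem[OF vs(2)]])
  then have "minopen X y \<subseteq> vs ! j"
    using vs(3) by (rule minopen_least)
  then have "card (minopen X ` (minopen X y - minopen X x))
      \<le> card (minopen X ` (vs ! j - minopen X x))"
    using \<open>openin X (vs ! j)\<close>
    by (intro card_mono finite_minopen_image) (auto dest: openin_subset)
  also have "\<dots> = j"
  proof -
    have "last (take (Suc j) vs) = vs ! j"
      using vs(2) by (simp add: take_Suc_conv_app_nth)
    then show ?thesis
      using covering_chain_length[OF chain] vs(2) hd by simp
  qed
  finally show ?thesis .
qed

lemma nested_seq_attaining:
  assumes x: "x \<in> topspace X" and y: "y \<in> topspace X"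
  defines "k \<equiv> card (minopen X ` (minopen X y - minopen X x))"
  shows "\<exists>vs. nested_seq X x vs \<and> k < length vs \<and> y \<in> vs ! k"
proof -
  define M where "M = minopen X x \<union> minopen X y"
  have "openin X M"
    unfolding M_def by (intro openin_Un openin_minopen x y)
  moreover have "minopen X x \<subseteq> M"
    unfolding M_def by (rule Un_upper1)
  ultimately obtain us where us: "covering_chain X us" "hd us = minopen X x" "last us = M"
    using covering_chain_exists[OF openin_minopen[OF x]] by blast
  obtain vs where vs: "covering_chain X vs" "hd vs = M" "last vs = topspace X"
    using covering_chain_exists[OF \<open>openin X M\<close> openin_topspace openin_subset[OF \<open>openin X M\<close>]]
    by blast
  then obtain r where r: "vs = M # r"
    by (cases vs) auto
  have "M - minopen X x = minopen X y - minopen X x"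
    unfolding M_def by blast
  then have len: "length us = Suc k"
    using covering_chain_length[OF us(1)] us(2,3) unfolding k_def by simp
  have "us \<noteq> []"
    using us(1) by (auto simp: covering_chain_def)
  have "nested_seq X x (us @ r)"
    unfolding nested_seq_iff_covering_chain
    using covering_chain_append[OF us(1)] us vs r \<open>us \<noteq> []\<close>
    by (simp add: last_append split: if_splits)
  moreover have "(us @ r) ! k = M"
    using len us(3) \<open>us \<noteq> []\<close> by (simp add: nth_append last_conv_nth)
  ultimately show ?thesis
    using len minopen_mem[OF y] unfolding M_def by (intro exI[of _ "us @ r"]) auto
qed

lemma Psi_eq_card_minopen_image:
  assumes "x \<in> topspace X" "y \<in> topspace X"
  shows "Psi X x y = card (minopen X ` (minopen X y - minopen X x))"
  unfolding Psi_def
proof (rule Least_equality)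
  show "\<exists>vs. nested_seq X x vs \<and> card (minopen X ` (minopen X y - minopen X x)) < length vs
      \<and> y \<in> vs ! card (minopen X ` (minopen X y - minopen X x))"
    using nested_seq_attaining[OF assms] .
next
  fix j
  assume "\<exists>vs. nested_seq X x vs \<and> j < length vs \<and> y \<in> vs ! j"
  then show "card (minopen X ` (minopen X y - minopen X x)) \<le> j"
    using card_minopen_image_le_nested_seq by blast
qed

lemma Psi_eq_0_iff:
  assumes x: "x \<in> topspace X" and y: "y \<in> topspace X"
  shows "Psi X x y = 0 \<longleftrightarrow> y \<in> minopen X x"
proof -
  have "finite (minopen X ` (minopen X y - minopen X x))"
    using minopen_subset_topspace[OF y] by (intro finite_minopen_image) auto
  then have "Psi X x y = 0 \<longleftrightarrow> minopen X y \<subseteq> minopen X x"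
    unfolding Psi_eq_card_minopen_image[OF x y] by simp
  also have "\<dots> \<longleftrightarrow> y \<in> minopen X x"
    using minopen_mem[OF y] minopen_subset_minopen[OF x] by auto
  finally show ?thesis .
qed

lemma sim_class_eq:
  assumes x: "x \<in> topspace X"
  shows "sim_class X x = {y \<in> topspace X. minopen X y = minopen X x}"
proof -
  have "psi_sim X x y \<longleftrightarrow> minopen X y = minopen X x" if y: "y \<in> topspace X" for y
  proof -
    have "psi_sim X x y \<longleftrightarrow> y \<in> minopen X x \<and> x \<in> minopen X y"
      unfolding psi_sim_def using Psi_eq_0_iff x y by simp
    also have "\<dots> \<longleftrightarrow> minopen X y = minopen X x"
      using minopen_mem minopen_subset_minopen x y by (metis subset_antisym)
    finally show ?thesis .
  qed
  then show ?thesis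
    unfolding sim_class_def by auto
qed

lemma finite_minopens: "x \<in> topspace X \<Longrightarrow> finite (minopens X x)"
  unfolding minopens_def by (intro finite_minopen_image minopen_subset_topspace)

lemma card_quot_minopen:
  assumes c: "c \<in> topspace X"
  shows "card (quot_minopen X c) = card (minopens X c)"
proof -
  define fibre where "fibre U = {y \<in> topspace X. minopen X y = U}" for U
  have "quot_minopen X c = fibre ` minopens X c"
    unfolding quot_minopen_def minopens_def image_image
  proof (intro image_cong refl)
    fix y
    assume "y \<in> minopen X c"
    then have "y \<in> topspace X"
      using minopen_subset_topspace[OF c] by auto
    then show "sim_class X y = fibre (minopen X y)"
      by (simp add: sim_class_eq fibre_def)
  qed
  moreover have "inj_on fibre (minopens X c)"
  proof (rule inj_onI)
    fix U V
    assume "U \<in> minopens X c" "fibre U = fibre V"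
    then obtain y where "y \<in> topspace X" "U = minopen X y" "y \<in> fibre V"
      using minopen_subset_topspace[OF c] unfolding minopens_def fibre_def by auto
    then show "U = V"
      by (simp add: fibre_def)
  qed
  ultimately show ?thesis
    by (simp add: card_image)
qed

lemma Psi_eq_card_minopens:
  assumes a: "a \<in> topspace X" and c: "c \<in> topspace X"
  shows "Psi X a c = card (minopens X c) - card (minopens X c \<inter> minopens X a)"
proof -
  have "Psi X a c = card (minopens X c - minopens X a)"
    unfolding Psi_eq_card_minopen_image[OF a c] minopens_def
    using minopen_image_Diff[OF openin_minopen[OF a] minopen_subset_topspace[OF c]] by simp
  also have "\<dots> = card (minopens X c) - card (minopens X c \<inter> minopens X a)"
    using finite_minopens[OF c] by (simp add: card_Diff_subset_Int)
  finally show ?thesis .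
qed

end

section \<open>Product spaces\<close>

lemma minopen_prod_topology:
  assumes fin: "finite (topspace X)" "finite (topspace Y)"
    and c: "c \<in> topspace X" and d: "d \<in> topspace Y"
  shows "minopen (prod_topology X Y) (c, d) = minopen X c \<times> minopen Y d"
proof (rule subset_antisym)
  have "openin (prod_topology X Y) (minopen X c \<times> minopen Y d)"
    using openin_minopen[OF fin(1) c] openin_minopen[OF fin(2) d]
    by (simp add: openin_prod_Times_iff)
  then show "minopen (prod_topology X Y) (c, d) \<subseteq> minopen X c \<times> minopen Y d"
    by (rule minopen_least) (simp add: minopen_mem c d)
next
  show "minopen X c \<times> minopen Y d \<subseteq> minopen (prod_topology X Y) (c, d)"
    unfolding minopen_def[of "prod_topology X Y"]
  proof (rule Inter_greatest)
    fix S
    assume "S \<in> {V. openin (prod_topology X Y) V \<and> (c, d) \<in> V}"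
    then obtain U V where "openin X U" "openin Y V" "c \<in> U" "d \<in> V" "U \<times> V \<subseteq> S"
      unfolding openin_prod_topology_alt by blast
    then show "minopen X c \<times> minopen Y d \<subseteq> S"
      using minopen_least[of X U c] minopen_least[of Y V d] by (meson Sigma_mono subset_trans)
  qed
qed

lemma minopens_prod_topology:
  assumes fin: "finite (topspace X)" "finite (topspace Y)"
    and c: "c \<in> topspace X" and d: "d \<in> topspace Y"
  shows "minopens (prod_topology X Y) (c, d) = (\<lambda>(K, L). K \<times> L) ` (minopens X c \<times> minopens Y d)"
proof -
  have "minopens X c \<times> minopens Y d =
      (\<lambda>(z, w). (minopen X z, minopen Y w)) ` (minopen X c \<times> minopen Y d)"
    unfolding minopens_def by (rule image_paired_Times[symmetric])
  then have "(\<lambda>(K, L). K \<times> L) ` (minopens X c \<times> minopens Y d) =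
      (\<lambda>(z, w). minopen X z \<times> minopen Y w) ` (minopen X c \<times> minopen Y d)"
    by (simp add: image_image case_prod_beta)
  also have "\<dots> = minopen (prod_topology X Y) ` (minopen X c \<times> minopen Y d)"
  proof (intro image_cong refl)
    fix p
    assume "p \<in> minopen X c \<times> minopen Y d"
    then obtain z w where "p = (z, w)" "z \<in> topspace X" "w \<in> topspace Y"
      using minopen_subset_topspace[OF c] minopen_subset_topspace[OF d] by auto
    then show "(\<lambda>(z, w). minopen X z \<times> minopen Y w) p = minopen (prod_topology X Y) p"
      by (simp add: minopen_prod_topology[OF fin])
  qed
  finally show ?thesis
    unfolding minopens_def minopen_prod_topology[OF fin c d] ..
qed

lemma inj_on_Times_nonempty:
  assumes "{} \<notin> \<K>" "{} \<notin> \<L>"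
  shows "inj_on (\<lambda>(K, L). K \<times> L) (\<K> \<times> \<L>)"
  using assms by (auto simp: inj_on_def times_eq_iff)

lemma Psi_prod_topology:
  assumes fin: "finite (topspace X)" "finite (topspace Y)"
    and a: "a \<in> topspace X" and c: "c \<in> topspace X"
    and b: "b \<in> topspace Y" and d: "d \<in> topspace Y"
  shows "Psi (prod_topology X Y) (a, b) (c, d) =
           card (minopens X c) * card (minopens Y d)
         - card (minopens X c \<inter> minopens X a) * card (minopens Y d \<inter> minopens Y b)"
proof -
  let ?times = "\<lambda>(K :: 'a set, L :: 'b set). K \<times> L"
  let ?A = "minopens X c" and ?A' = "minopens X a" and ?B = "minopens Y d" and ?B' = "minopens Y b"
  have inj: "inj_on ?times ((?A \<union> ?A') \<times> (?B \<union> ?B'))"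
    using empty_notin_minopens[OF a] empty_notin_minopens[OF b]
      empty_notin_minopens[OF c] empty_notin_minopens[OF d]
    by (intro inj_on_Times_nonempty) auto
  have card_times: "card (?times ` (S \<times> T)) = card S * card T"
    if "S \<subseteq> ?A \<union> ?A'" "T \<subseteq> ?B \<union> ?B'" for S T
  proof -
    have "S \<times> T \<subseteq> (?A \<union> ?A') \<times> (?B \<union> ?B')"
      using that by auto
    from card_image[OF inj_on_subset[OF inj this]] show ?thesis
      by (simp add: card_cartesian_product)
  qed
  have "finite (topspace (prod_topology X Y))"
    using fin by simp
  then have "Psi (prod_topology X Y) (a, b) (c, d) =
      card (?times ` (?A \<times> ?B)) - card (?times ` (?A \<times> ?B) \<inter> ?times ` (?A' \<times> ?B'))"
    using Psi_eq_card_minopens[of "prod_topology X Y" "(a, b)" "(c, d)"]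
    by (simp add: a b c d minopens_prod_topology[OF fin])
  also have "?times ` (?A \<times> ?B) \<inter> ?times ` (?A' \<times> ?B') = ?times ` ((?A \<inter> ?A') \<times> (?B \<inter> ?B'))"
  proof -
    have "?A \<times> ?B \<subseteq> (?A \<union> ?A') \<times> (?B \<union> ?B')" "?A' \<times> ?B' \<subseteq> (?A \<union> ?A') \<times> (?B \<union> ?B')"
      by auto
    from inj_on_image_Int[OF inj this] show ?thesis
      by (simp add: Times_Int_Times)
  qed
  also have "card (?times ` (?A \<times> ?B)) = card ?A * card ?B"
    by (rule card_times) auto
  also have "card (?times ` ((?A \<inter> ?A') \<times> (?B \<inter> ?B'))) = card (?A \<inter> ?A') * card (?B \<inter> ?B')"
    by (rule card_times) auto
  finally show ?thesis .
qed

theorem theorem4p1: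
  fixes X :: "'a topology" and Y :: "'b topology"
  assumes "finite (topspace X)" and "finite (topspace Y)"
    and "a \<in> topspace X" and "c \<in> topspace X"
    and "b \<in> topspace Y" and "d \<in> topspace Y"
  shows "int (Psi (prod_topology X Y) (a, b) (c, d)) =
           int (Psi X a c) * int (card (quot_minopen Y d))
         + int (Psi Y b d) * int (card (quot_minopen X c))
         - int (Psi X a c) * int (Psi Y b d)"
proof -
  let ?A = "minopens X c" and ?A' = "minopens X a" and ?B = "minopens Y d" and ?B' = "minopens Y b"
  note Psi_prod = Psi_prod_topology[OF assms]
    and Psi_X = Psi_eq_card_minopens[OF assms(1,3,4)]
    and Psi_Y = Psi_eq_card_minopens[OF assms(2,5,6)]
    and quot_X = card_quot_minopen[OF assms(1,4)]
    and quot_Y = card_quot_minopen[OF assms(2,6)]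
  have "card (?A \<inter> ?A') \<le> card ?A" "card (?B \<inter> ?B') \<le> card ?B"
    using assms by (simp_all add: card_mono finite_minopens)
  moreover from this have "card (?A \<inter> ?A') * card (?B \<inter> ?B') \<le> card ?A * card ?B"
    by (rule mult_le_mono)
  ultimately show ?thesis
    unfolding Psi_prod Psi_X Psi_Y quot_X quot_Y by (simp add: of_nat_diff algebra_simps)
qed

end
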